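(* Let $q(z,\psi)$ be a joint probability density, fix $z$ with $q(z)=\int q(z,\psi)\,d\psi>0$, and set $q(\psi\mid z)=q(z,\psi)/q(z)$. Let $\tau(\psi\mid z)$ be a probability density in $\psi$ such that $\tau(\psi\mid z)=0$ implies $q(\psi,z)=0$. For $K\in\mathbb{N}_0$ define $$\omega_{q,\tau}(\psi_{0:K}\mid z)=\frac{q(\psi_0\mid z)\prod_{k=1}^K\tau(\psi_k\mid z)}{\frac{1}{K+1}\sum_{k=0}^{K}\frac{q(\psi_k\mid z)}{\tau(\psi_k\mid z)}}$$ and $$\nu_{q,\tau}(\psi_{0:K+1}\mid z)=\omega_{q,\tau}(\psi_{0:K}\mid z)\,\tau(\psi_{K+1}\mid z)\,\frac{1}{K+2}\sum_{k=0}^{K+1}\frac{q(\psi_k\mid z)}{\tau(\psi_k\mid z)}.$$ Then $\nu_{q,\tau}(\psi_{0:K+1}\mid z)$ is a normalized probability density in $\psi_{0:K+1}$ (it is non-negative and integrates to $1$).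
   Context: All densities are with respect to a fixed base measure.
   Formalization: Where the average $\frac{1}{K+1}\sum_{k=0}^{K}\frac{q(\psi_k\mid z)}{\tau(\psi_k\mid z)}$ vanishes, $\omega_{q,\tau}(\psi_{0:K}\mid z)$ equals $\prod_{k=0}^{K}\tau(\psi_k\mid z)$ instead of the quotient, and both base measures are sigma-finite. Apart from conventions, each condition added here is assumed in the paper as well or is needed for the statement above to hold. *)

theory Defs
  imports "HOL-Probability.Probability"
begin

definition marg :: "'p measure \<Rightarrow> ('z \<Rightarrow> 'p \<Rightarrow> real) \<Rightarrow> 'z \<Rightarrow> ennreal" where
  "marg M q z = (\<integral>\<^sup>+ \<psi>. ennreal (q z \<psi>) \<partial>M)"

definition cond :: "'p measure \<Rightarrow> ('z \<Rightarrow> 'p \<Rightarrow> real) \<Rightarrow> 'z \<Rightarrow> 'p \<Rightarrow> real" where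
  "cond M q z \<psi> = q z \<psi> / enn2real (marg M q z)"

definition avg_ratio :: "'p measure \<Rightarrow> ('z \<Rightarrow> 'p \<Rightarrow> real) \<Rightarrow> ('z \<Rightarrow> 'p \<Rightarrow> real)
    \<Rightarrow> 'z \<Rightarrow> nat \<Rightarrow> (nat \<Rightarrow> 'p) \<Rightarrow> real" where
  "avg_ratio M q \<tau> z K \<psi>s =
     (1 / real (K + 1)) * (\<Sum>k\<le>K. cond M q z (\<psi>s k) / \<tau> z (\<psi>s k))"

text \<open>omega_{q,tau}(psi_{0:K} | z). Convention at the undefined points 0/0
  (where the average is 0, hence also the numerator is 0): value prod_{k=0}^K tau(psi_k|z).\<close>
definition omega :: "'p measure \<Rightarrow> ('z \<Rightarrow> 'p \<Rightarrow> real) \<Rightarrow> ('z \<Rightarrow> 'p \<Rightarrow> real)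
    \<Rightarrow> 'z \<Rightarrow> nat \<Rightarrow> (nat \<Rightarrow> 'p) \<Rightarrow> real" where
  "omega M q \<tau> z K \<psi>s =
     (if avg_ratio M q \<tau> z K \<psi>s = 0 then (\<Prod>k\<le>K. \<tau> z (\<psi>s k))
      else cond M q z (\<psi>s 0) * (\<Prod>k\<in>{1..K}. \<tau> z (\<psi>s k)) / avg_ratio M q \<tau> z K \<psi>s)"

definition nu :: "'p measure \<Rightarrow> ('z \<Rightarrow> 'p \<Rightarrow> real) \<Rightarrow> ('z \<Rightarrow> 'p \<Rightarrow> real)
    \<Rightarrow> 'z \<Rightarrow> nat \<Rightarrow> (nat \<Rightarrow> 'p) \<Rightarrow> real" where
  "nu M q \<tau> z K \<psi>s =
     omega M q \<tau> z K \<psi>s * \<tau> z (\<psi>s (Suc K)) * avg_ratio M q \<tau> z (Suc K) \<psi>s"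

end

theory Submission
  imports Defs
begin

text \<open>
  Let r = q(.|z) / tau(.|z) be the importance ratio, T the product of the proposal densities
  tau(psi_k|z) and A the mean of the ratios r(psi_k). Where A does not vanish,
  omega = T r(psi_0) / A. Under the product measure the coordinates are exchangeable and T / A is
  symmetric, so r(psi_0) may be replaced by the mean ratio A, which cancels the denominator; hence
  omega integrates to the integral of T, which is 1. Integrating nu over its last coordinate leaves
  (K+1)/(K+2) omega A + 1/(K+2) omega, since both tau and tau r = q(.|z) integrate to 1, and
  omega A = q(psi_0|z) tau(psi_1|z) ... tau(psi_K|z) is a product density.
\<close>

lemma permutes_ball_reindex:
  assumes "s permutes I"
  shows "(\<forall>k\<in>I. P (s k) k) \<longleftrightarrow> (\<forall>j\<in>I. P j (inv s j))"
proof -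
  have "inv s j \<in> I" "s (inv s j) = j" if "j \<in> I" for j
    using assms that by (simp_all add: permutes_inv permutes_in_image permutes_inverses)
  moreover have "s k \<in> I" "inv s (s k) = k" if "k \<in> I" for k
    using assms that by (simp_all add: permutes_in_image permutes_inverses)
  ultimately show ?thesis by metis
qed

lemma PiM_component_in_space: "x \<in> space (PiM I (\<lambda>_. M)) \<Longrightarrow> i \<in> I \<Longrightarrow> x i \<in> space M"
  by (auto simp: space_PiM)

lemma measurable_PiM_permute:
  "s permutes I \<Longrightarrow> (\<lambda>x. \<lambda>k\<in>I. x (s k)) \<in> PiM I (\<lambda>_. M) \<rightarrow>\<^sub>M PiM I (\<lambda>_. M)"
  by (intro measurable_restrict measurable_component_singleton) (auto simp: permutes_in_image)

lemma distr_PiM_permute: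
  fixes M :: "'a measure"
  assumes "sigma_finite_measure M" and "finite I" and s: "s permutes I"
  shows "distr (PiM I (\<lambda>_. M)) (PiM I (\<lambda>_. M)) (\<lambda>x. \<lambda>k\<in>I. x (s k)) = PiM I (\<lambda>_. M)"
proof -
  interpret product_sigma_finite "\<lambda>_. M"
    using assms(1) by (simp add: product_sigma_finite_def)
  have s_inv: "inv s permutes I"
    using s by (rule permutes_inv)
  show ?thesis
  proof (rule PiM_eqI[OF \<open>finite I\<close>])
    fix A assume A: "\<And>i. i \<in> I \<Longrightarrow> A i \<in> sets M"
    have "(\<lambda>x. \<lambda>k\<in>I. x (s k)) -` PiE I A \<inter> space (PiM I (\<lambda>_. M)) = PiE I (\<lambda>k. A (inv s k))"
    proof -
      have "(\<forall>k\<in>I. x (s k) \<in> A k) \<longleftrightarrow> (\<forall>j\<in>I. x j \<in> A (inv s j))" for x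
        using permutes_ball_reindex[OF s, of "\<lambda>j k. x j \<in> A k"] .
      moreover have "A (inv s i) \<subseteq> space M" if "i \<in> I" for i
        using A[THEN sets.sets_into_space] permutes_in_image[OF s_inv] that by blast
      ultimately show ?thesis
        using s by (auto simp: space_PiM PiE_iff permutes_in_image) blast
    qed
    moreover have "PiE I A \<in> sets (PiM I (\<lambda>_. M))"
      using A by (intro sets_PiM_I_finite \<open>finite I\<close>) auto
    ultimately have "emeasure (distr (PiM I (\<lambda>_. M)) (PiM I (\<lambda>_. M)) (\<lambda>x. \<lambda>k\<in>I. x (s k))) (PiE I A)
        = (\<Prod>k\<in>I. emeasure M (A (inv s k)))"
      using measurable_PiM_permute[OF s, of M] A s_inv by (simp add: emeasure_distr emeasure_PiM \<open>finite I\<close> permutes_in_image)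
    also have "\<dots> = (\<Prod>k\<in>I. emeasure M (A k))"
      using prod.permute[OF s_inv, of "\<lambda>k. emeasure M (A k)"] by (simp add: comp_def)
    finally show "emeasure (distr (PiM I (\<lambda>_. M)) (PiM I (\<lambda>_. M)) (\<lambda>x. \<lambda>k\<in>I. x (s k))) (PiE I A)
        = (\<Prod>k\<in>I. emeasure M (A k))" .
  qed simp
qed

lemma nn_integral_PiM_permute:
  fixes M :: "'a measure"
  assumes "sigma_finite_measure M" and "finite I" and s: "s permutes I"
    and f: "f \<in> borel_measurable (PiM I (\<lambda>_. M))"
  shows "(\<integral>\<^sup>+ x. f (\<lambda>k\<in>I. x (s k)) \<partial>PiM I (\<lambda>_. M)) = (\<integral>\<^sup>+ x. f x \<partial>PiM I (\<lambda>_. M))"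
proof -
  have "(\<integral>\<^sup>+ x. f (\<lambda>k\<in>I. x (s k)) \<partial>PiM I (\<lambda>_. M))
      = (\<integral>\<^sup>+ x. f x \<partial>distr (PiM I (\<lambda>_. M)) (PiM I (\<lambda>_. M)) (\<lambda>x. \<lambda>k\<in>I. x (s k)))"
    using measurable_PiM_permute[OF s, of M] f by (simp add: nn_integral_distr)
  also have "\<dots> = (\<integral>\<^sup>+ x. f x \<partial>PiM I (\<lambda>_. M))"
    using distr_PiM_permute[OF assms(1-3)] by simp
  finally show ?thesis .
qed

lemma nn_integral_PiM_exchange_component:
  fixes M :: "'a measure" and H :: "('i \<Rightarrow> 'a) \<Rightarrow> ennreal"
  assumes "sigma_finite_measure M" and "finite I" and "i \<in> I" and "j \<in> I"
    and H[measurable]: "H \<in> borel_measurable (PiM I (\<lambda>_. M))"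
    and g[measurable]: "g \<in> borel_measurable M"
    and H_symmetric: "\<And>s x. s permutes I \<Longrightarrow> x \<in> space (PiM I (\<lambda>_. M)) \<Longrightarrow> H (\<lambda>k\<in>I. x (s k)) = H x"
  shows "(\<integral>\<^sup>+ x. H x * g (x i) \<partial>PiM I (\<lambda>_. M)) = (\<integral>\<^sup>+ x. H x * g (x j) \<partial>PiM I (\<lambda>_. M))"
proof -
  define s where "s = Transposition.transpose i j"
  have s: "s permutes I"
    unfolding s_def using \<open>i \<in> I\<close> \<open>j \<in> I\<close> by (rule permutes_swap_id)
  have "(\<integral>\<^sup>+ x. H x * g (x j) \<partial>PiM I (\<lambda>_. M))
      = (\<integral>\<^sup>+ x. H (\<lambda>k\<in>I. x (s k)) * g ((\<lambda>k\<in>I. x (s k)) j) \<partial>PiM I (\<lambda>_. M))"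
    using \<open>j \<in> I\<close> by (intro nn_integral_PiM_permute[symmetric] assms(1,2) s) measurable
  also have "\<dots> = (\<integral>\<^sup>+ x. H x * g (x i) \<partial>PiM I (\<lambda>_. M))"
    using H_symmetric[OF s] \<open>j \<in> I\<close> by (intro nn_integral_cong) (simp add: s_def)
  finally show ?thesis ..
qed

lemma nn_integral_PiM_symmetric_sum:
  fixes M :: "'a measure" and H :: "('i \<Rightarrow> 'a) \<Rightarrow> ennreal"
  assumes "sigma_finite_measure M" and "finite I" and "i \<in> I"
    and H[measurable]: "H \<in> borel_measurable (PiM I (\<lambda>_. M))"
    and g[measurable]: "g \<in> borel_measurable M"
    and H_symmetric: "\<And>s x. s permutes I \<Longrightarrow> x \<in> space (PiM I (\<lambda>_. M)) \<Longrightarrow> H (\<lambda>k\<in>I. x (s k)) = H x"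
  shows "(\<integral>\<^sup>+ x. H x * (\<Sum>j\<in>I. g (x j)) \<partial>PiM I (\<lambda>_. M))
    = of_nat (card I) * (\<integral>\<^sup>+ x. H x * g (x i) \<partial>PiM I (\<lambda>_. M))"
proof -
  have "(\<integral>\<^sup>+ x. H x * (\<Sum>j\<in>I. g (x j)) \<partial>PiM I (\<lambda>_. M))
      = (\<Sum>j\<in>I. \<integral>\<^sup>+ x. H x * g (x j) \<partial>PiM I (\<lambda>_. M))"
    unfolding sum_distrib_left by (intro nn_integral_sum) measurable
  also have "\<dots> = (\<Sum>j\<in>I. \<integral>\<^sup>+ x. H x * g (x i) \<partial>PiM I (\<lambda>_. M))"
    by (intro sum.cong refl nn_integral_PiM_exchange_component[symmetric] assms H_symmetric)
  finally show ?thesis by simp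
qed

definition ratio_mean :: "('p \<Rightarrow> real) \<Rightarrow> ('p \<Rightarrow> real) \<Rightarrow> nat \<Rightarrow> (nat \<Rightarrow> 'p) \<Rightarrow> real" where
  "ratio_mean c t K x = (1 / real (K + 1)) * (\<Sum>k\<le>K. c (x k) / t (x k))"

definition omega_density :: "('p \<Rightarrow> real) \<Rightarrow> ('p \<Rightarrow> real) \<Rightarrow> nat \<Rightarrow> (nat \<Rightarrow> 'p) \<Rightarrow> real" where
  "omega_density c t K x =
     (if ratio_mean c t K x = 0 then (\<Prod>k\<le>K. t (x k))
      else c (x 0) * (\<Prod>k\<in>{1..K}. t (x k)) / ratio_mean c t K x)"

definition nu_density :: "('p \<Rightarrow> real) \<Rightarrow> ('p \<Rightarrow> real) \<Rightarrow> nat \<Rightarrow> (nat \<Rightarrow> 'p) \<Rightarrow> real" where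
  "nu_density c t K x = omega_density c t K x * t (x (Suc K)) * ratio_mean c t (Suc K) x"

lemma avg_ratio_eq_ratio_mean: "avg_ratio M q \<tau> z = ratio_mean (cond M q z) (\<tau> z)"
  by (intro ext) (simp add: avg_ratio_def ratio_mean_def)

lemma omega_eq_omega_density: "omega M q \<tau> z = omega_density (cond M q z) (\<tau> z)"
  by (intro ext) (simp add: omega_def omega_density_def avg_ratio_eq_ratio_mean)

lemma nu_eq_nu_density: "nu M q \<tau> z = nu_density (cond M q z) (\<tau> z)"
  by (intro ext) (simp add: nu_def nu_density_def omega_eq_omega_density avg_ratio_eq_ratio_mean)

lemma ratio_mean_cong: "(\<And>k. k \<le> K \<Longrightarrow> x k = y k) \<Longrightarrow> ratio_mean c t K x = ratio_mean c t K y"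
  unfolding ratio_mean_def by (auto intro!: sum.cong)

lemma omega_density_cong: "(\<And>k. k \<le> K \<Longrightarrow> x k = y k) \<Longrightarrow> omega_density c t K x = omega_density c t K y"
  using ratio_mean_cong[of K x y c t] unfolding omega_density_def by (auto intro!: prod.cong)

lemma ratio_mean_Suc:
  "ratio_mean c t (Suc K) x
    = (real (K + 1) * ratio_mean c t K x + c (x (Suc K)) / t (x (Suc K))) / real (K + 2)"
  by (simp add: ratio_mean_def)

lemma ratio_mean_permute:
  "s permutes {..K} \<Longrightarrow> ratio_mean c t K (\<lambda>k\<in>{..K}. x (s k)) = ratio_mean c t K x"
  using sum.permute[of s "{..K}" "\<lambda>k. c (x k) / t (x k)"] by (simp add: ratio_mean_def comp_def)

lemma ratio_mean_nonneg:
  "(\<And>k. k \<le> K \<Longrightarrow> 0 \<le> c (x k)) \<Longrightarrow> (\<And>k. k \<le> K \<Longrightarrow> 0 \<le> t (x k)) \<Longrightarrow> 0 \<le> ratio_mean c t K x"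
  unfolding ratio_mean_def by (auto intro!: sum_nonneg divide_nonneg_nonneg)

lemma omega_density_nonneg:
  "(\<And>k. k \<le> K \<Longrightarrow> 0 \<le> c (x k)) \<Longrightarrow> (\<And>k. k \<le> K \<Longrightarrow> 0 \<le> t (x k)) \<Longrightarrow> 0 \<le> omega_density c t K x"
  using ratio_mean_nonneg[of K c x t] unfolding omega_density_def
  by (auto intro!: prod_nonneg divide_nonneg_nonneg mult_nonneg_nonneg)

lemma mult_divide_cancel_support: "(t = 0 \<Longrightarrow> c = 0) \<Longrightarrow> t * (c / t) = (c::real)"
  by (cases "t = 0") simp_all

lemma ratio_mean_weights_sum:
  "(if ratio_mean c t K x = 0 then 0 else T / ratio_mean c t K x) * (\<Sum>k\<le>K. c (x k) / t (x k))
    = real (Suc K) * (if ratio_mean c t K x = 0 then 0 else T)"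
  by (auto simp: ratio_mean_def)

lemma omega_density_mult_ratio_mean:
  assumes c: "\<And>k. k \<le> K \<Longrightarrow> 0 \<le> c (x k)" and t: "\<And>k. k \<le> K \<Longrightarrow> 0 \<le> t (x k)"
    and support: "t (x 0) = 0 \<Longrightarrow> c (x 0) = 0"
  shows "omega_density c t K x * ratio_mean c t K x = c (x 0) * (\<Prod>k\<in>{1..K}. t (x k))"
proof (cases "ratio_mean c t K x = 0")
  case True
  then have "(\<Sum>k\<le>K. c (x k) / t (x k)) = 0"
    by (simp add: ratio_mean_def)
  then have "c (x 0) / t (x 0) = 0"
    using c t by (subst (asm) sum_nonneg_eq_0_iff) auto
  then have "c (x 0) = 0"
    using support by auto
  with True show ?thesis by simp
qed (simp add: omega_density_def)

lemma omega_density_split: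
  assumes "t (x 0) = 0 \<Longrightarrow> c (x 0) = 0"
  shows "omega_density c t K x
    = (if ratio_mean c t K x = 0 then \<Prod>k\<le>K. t (x k) else 0)
      + (if ratio_mean c t K x = 0 then 0 else (\<Prod>k\<le>K. t (x k)) / ratio_mean c t K x) * (c (x 0) / t (x 0))"
proof -
  have "{..K} = insert 0 {1..K}" by auto
  then have "(\<Prod>k\<le>K. t (x k)) * (c (x 0) / t (x 0)) = c (x 0) * (\<Prod>k\<in>{1..K}. t (x k))"
    using mult_divide_cancel_support[of "t (x 0)" "c (x 0)"] assms by simp
  then show ?thesis
    by (simp add: omega_density_def field_simps)
qed


lemma nu_density_update_last:
  assumes c: "\<And>k. k \<le> K \<Longrightarrow> 0 \<le> c (x k)" and t: "\<And>k. k \<le> K \<Longrightarrow> 0 \<le> t (x k)"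
    and support: "t (x 0) = 0 \<Longrightarrow> c (x 0) = 0" and support_last: "t y = 0 \<Longrightarrow> c y = 0"
  shows "nu_density c t K (x(Suc K := y))
    = real (K + 1) / real (K + 2) * (c (x 0) * (\<Prod>k\<in>{1..K}. t (x k))) * t y
      + 1 / real (K + 2) * omega_density c t K x * c y"
proof -
  let ?w = "omega_density c t K x"
  let ?A = "ratio_mean c t K x"
  have "omega_density c t K (x(Suc K := y)) = ?w"
    by (rule omega_density_cong) simp
  moreover have "ratio_mean c t (Suc K) (x(Suc K := y)) = (real (K + 1) * ?A + c y / t y) / real (K + 2)"
    unfolding ratio_mean_Suc by (simp add: ratio_mean_cong[of K "x(Suc K := y)" x])
  moreover have "?w * t y * ((real (K + 1) * ?A + u) / real (K + 2))
      = real (K + 1) / real (K + 2) * (?w * ?A) * t y + 1 / real (K + 2) * ?w * (t y * u)" for u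
    by (simp add: add_divide_distrib algebra_simps)
  moreover have "t y * (c y / t y) = c y"
    using support_last by (rule mult_divide_cancel_support)
  ultimately show ?thesis
    using omega_density_mult_ratio_mean[of K c x t, OF c t support] by (simp add: nu_density_def)
qed

locale importance_sampling =
  fixes M :: "'p measure" and c t :: "'p \<Rightarrow> real"
  assumes M_sigma_finite: "sigma_finite_measure M"
    and c_measurable[measurable]: "c \<in> borel_measurable M"
    and t_measurable[measurable]: "t \<in> borel_measurable M"
    and c_nonneg: "\<And>\<psi>. \<psi> \<in> space M \<Longrightarrow> 0 \<le> c \<psi>"
    and t_nonneg: "\<And>\<psi>. \<psi> \<in> space M \<Longrightarrow> 0 \<le> t \<psi>"
    and t_normalized: "(\<integral>\<^sup>+ \<psi>. ennreal (t \<psi>) \<partial>M) = 1"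
    and support: "\<And>\<psi>. \<psi> \<in> space M \<Longrightarrow> t \<psi> = 0 \<Longrightarrow> c \<psi> = 0"
begin

sublocale product_sigma_finite "\<lambda>_. M"
  using M_sigma_finite by (simp add: product_sigma_finite_def)

lemma borel_measurable_ratio_mean[measurable]:
  "ratio_mean c t K \<in> borel_measurable (PiM {..K} (\<lambda>_. M))"
  unfolding ratio_mean_def by measurable

lemma borel_measurable_omega_density[measurable]:
  "omega_density c t K \<in> borel_measurable (PiM {..K} (\<lambda>_. M))"
  unfolding omega_density_def by measurable

lemma borel_measurable_nu_density:
  "nu_density c t K \<in> borel_measurable (PiM {..Suc K} (\<lambda>_. M))"
  unfolding nu_density_def omega_density_def ratio_mean_def by measurable

lemma nu_density_nonneg:
  assumes "x \<in> space (PiM {..Suc K} (\<lambda>_. M))"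
  shows "0 \<le> nu_density c t K x"
proof -
  have "x k \<in> space M" if "k \<le> Suc K" for k
    using assms that by (simp add: PiM_component_in_space)
  then show ?thesis
    unfolding nu_density_def using c_nonneg t_nonneg
    by (intro mult_nonneg_nonneg omega_density_nonneg ratio_mean_nonneg) auto
qed

lemma nn_integral_reweight_first_ratio:
  "(\<integral>\<^sup>+ x. ennreal (if ratio_mean c t K x = 0 then 0 else (\<Prod>k\<le>K. t (x k)) / ratio_mean c t K x)
      * ennreal (c (x 0) / t (x 0)) \<partial>PiM {..K} (\<lambda>_. M))
    = (\<integral>\<^sup>+ x. ennreal (if ratio_mean c t K x = 0 then 0 else \<Prod>k\<le>K. t (x k)) \<partial>PiM {..K} (\<lambda>_. M))"
proof -
  let ?P = "PiM {..K} (\<lambda>_. M)"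
  let ?A = "ratio_mean c t K"
  define T where "T x = (\<Prod>k\<le>K. t (x k))" for x :: "nat \<Rightarrow> 'p"
  define H where "H x = ennreal (if ?A x = 0 then 0 else T x / ?A x)" for x
  define r where "r \<psi> = ennreal (c \<psi> / t \<psi>)" for \<psi>
  have [measurable]: "T \<in> borel_measurable ?P" "H \<in> borel_measurable ?P" "r \<in> borel_measurable M"
    unfolding T_def[abs_def] H_def[abs_def] r_def[abs_def] by measurable
  have H_symmetric: "H (\<lambda>k\<in>{..K}. x (s k)) = H x" if "s permutes {..K}" for s x
  proof -
    have "T (\<lambda>k\<in>{..K}. x (s k)) = T x"
      using prod.permute[OF that, of "\<lambda>k. t (x k)"] by (simp add: T_def comp_def)
    then show ?thesis
      by (simp add: H_def ratio_mean_permute[OF that])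
  qed
  have "of_nat (Suc K) * (\<integral>\<^sup>+ x. H x * r (x 0) \<partial>?P) = (\<integral>\<^sup>+ x. H x * (\<Sum>j\<le>K. r (x j)) \<partial>?P)"
    using nn_integral_PiM_symmetric_sum[of M "{..K}" 0 H r] M_sigma_finite H_symmetric by simp
  also have "\<dots> = (\<integral>\<^sup>+ x. of_nat (Suc K) * ennreal (if ?A x = 0 then 0 else T x) \<partial>?P)"
  proof (rule nn_integral_cong)
    fix x assume "x \<in> space ?P"
    then have component: "x k \<in> space M" if "k \<le> K" for k
      using that by (simp add: PiM_component_in_space)
    have ratios_nonneg: "0 \<le> c (x j) / t (x j)" if "j \<le> K" for j
      using c_nonneg t_nonneg component[OF that] by simp
    then have sum_r: "(\<Sum>j\<le>K. r (x j)) = ennreal (\<Sum>j\<le>K. c (x j) / t (x j))"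
      unfolding r_def by (intro sum_ennreal) auto
    have "H x * (\<Sum>j\<le>K. r (x j))
        = ennreal ((if ?A x = 0 then 0 else T x / ?A x) * (\<Sum>j\<le>K. c (x j) / t (x j)))"
      unfolding H_def sum_r by (rule ennreal_mult''[symmetric]) (auto intro!: sum_nonneg ratios_nonneg)
    also have "\<dots> = ennreal (real (Suc K) * (if ?A x = 0 then 0 else T x))"
      by (simp add: ratio_mean_weights_sum)
    finally show "H x * (\<Sum>j\<le>K. r (x j)) = of_nat (Suc K) * ennreal (if ?A x = 0 then 0 else T x)"
      by (simp add: ennreal_mult' ennreal_of_nat_eq_real_of_nat)
  qed
  also have "\<dots> = of_nat (Suc K) * (\<integral>\<^sup>+ x. ennreal (if ?A x = 0 then 0 else T x) \<partial>?P)"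
    by (intro nn_integral_cmult) measurable
  finally show ?thesis
    unfolding H_def r_def T_def by (simp add: ennreal_mult_cancel_left)
qed

lemma nn_integral_omega_density:
  "(\<integral>\<^sup>+ x. ennreal (omega_density c t K x) \<partial>PiM {..K} (\<lambda>_. M)) = 1"
proof -
  let ?P = "PiM {..K} (\<lambda>_. M)"
  let ?A = "ratio_mean c t K"
  let ?T = "\<lambda>x. \<Prod>k\<le>K. t (x k)"
  let ?r = "\<lambda>x. c (x 0) / t (x 0)"
  have "(\<integral>\<^sup>+ x. ennreal (omega_density c t K x) \<partial>?P)
      = (\<integral>\<^sup>+ x. ennreal (if ?A x = 0 then ?T x else 0)
          + ennreal (if ?A x = 0 then 0 else ?T x / ?A x) * ennreal (?r x) \<partial>?P)"
  proof (rule nn_integral_cong)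
    fix x assume "x \<in> space ?P"
    then have component: "x k \<in> space M" if "k \<le> K" for k
      using that by (simp add: PiM_component_in_space)
    have "0 \<le> ?T x" "0 \<le> ?A x" "0 \<le> ?r x"
      using c_nonneg t_nonneg component by (auto intro!: prod_nonneg ratio_mean_nonneg)
    then show "ennreal (omega_density c t K x) = ennreal (if ?A x = 0 then ?T x else 0)
        + ennreal (if ?A x = 0 then 0 else ?T x / ?A x) * ennreal (?r x)"
      using support[OF component]
      by (simp add: omega_density_split ennreal_mult''[symmetric])
  qed
  also have "\<dots> = (\<integral>\<^sup>+ x. ennreal (if ?A x = 0 then ?T x else 0)
      + ennreal (if ?A x = 0 then 0 else ?T x) \<partial>?P)"
    by (simp add: nn_integral_add nn_integral_reweight_first_ratio)
  also have "\<dots> = (\<integral>\<^sup>+ x. (\<Prod>k\<le>K. ennreal (t (x k))) \<partial>?P)"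
  proof (rule nn_integral_cong)
    fix x assume "x \<in> space ?P"
    then have "(\<Prod>k\<le>K. ennreal (t (x k))) = ennreal (?T x)"
      using t_nonneg by (intro prod_ennreal) (simp add: PiM_component_in_space)
    then show "ennreal (if ?A x = 0 then ?T x else 0) + ennreal (if ?A x = 0 then 0 else ?T x)
        = (\<Prod>k\<le>K. ennreal (t (x k)))"
      by simp
  qed
  also have "\<dots> = (\<Prod>k\<le>K. \<integral>\<^sup>+ \<psi>. ennreal (t \<psi>) \<partial>M)"
    by (intro product_nn_integral_prod) auto
  finally show ?thesis
    by (simp add: t_normalized)
qed

lemma nn_integral_target_times_proposals:
  fixes K :: nat
  assumes c_normalized: "(\<integral>\<^sup>+ \<psi>. ennreal (c \<psi>) \<partial>M) = 1"
  shows "(\<integral>\<^sup>+ x. ennreal (c (x 0) * (\<Prod>k\<in>{1..K}. t (x k))) \<partial>PiM {..K} (\<lambda>_. M)) = 1"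
proof -
  define f where "f k = (if k = 0 then c else t)" for k :: nat
  have "(\<integral>\<^sup>+ x. ennreal (c (x 0) * (\<Prod>k\<in>{1..K}. t (x k))) \<partial>PiM {..K} (\<lambda>_. M))
      = (\<integral>\<^sup>+ x. (\<Prod>k\<le>K. ennreal (f k (x k))) \<partial>PiM {..K} (\<lambda>_. M))"
  proof (rule nn_integral_cong)
    fix x assume x: "x \<in> space (PiM {..K} (\<lambda>_. M))"
    have "{..K} = insert 0 {1..K}"
      by auto
    then have "c (x 0) * (\<Prod>k\<in>{1..K}. t (x k)) = (\<Prod>k\<le>K. f k (x k))"
      by (simp add: f_def)
    also have "ennreal \<dots> = (\<Prod>k\<le>K. ennreal (f k (x k)))"
      using x c_nonneg t_nonneg by (intro prod_ennreal[symmetric]) (simp add: f_def PiM_component_in_space)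
    finally show "ennreal (c (x 0) * (\<Prod>k\<in>{1..K}. t (x k))) = (\<Prod>k\<le>K. ennreal (f k (x k)))" .
  qed
  also have "\<dots> = (\<Prod>k\<le>K. \<integral>\<^sup>+ \<psi>. ennreal (f k \<psi>) \<partial>M)"
    by (intro product_nn_integral_prod) (auto simp: f_def)
  also have "\<dots> = 1"
    using c_normalized t_normalized by (intro prod.neutral) (simp add: f_def)
  finally show ?thesis .
qed

lemma nn_integral_nu_density_last_coordinate:
  assumes c_normalized: "(\<integral>\<^sup>+ \<psi>. ennreal (c \<psi>) \<partial>M) = 1"
    and x: "x \<in> space (PiM {..K} (\<lambda>_. M))"
  shows "(\<integral>\<^sup>+ y. ennreal (nu_density c t K (x(Suc K := y))) \<partial>M)
    = ennreal (real (K + 1) / real (K + 2)) * ennreal (c (x 0) * (\<Prod>k\<in>{1..K}. t (x k)))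
      + ennreal (1 / real (K + 2)) * ennreal (omega_density c t K x)"
proof -
  have component: "x k \<in> space M" if "k \<le> K" for k
    using x that by (simp add: PiM_component_in_space)
  define a where "a = real (K + 1) / real (K + 2) * (c (x 0) * (\<Prod>k\<in>{1..K}. t (x k)))"
  define b where "b = 1 / real (K + 2) * omega_density c t K x"
  have a_nonneg: "0 \<le> a" and b_nonneg: "0 \<le> b"
    unfolding a_def b_def using c_nonneg t_nonneg component
    by (auto intro!: mult_nonneg_nonneg divide_nonneg_nonneg prod_nonneg omega_density_nonneg)
  have nu: "nu_density c t K (x(Suc K := y)) = a * t y + b * c y" if y: "y \<in> space M" for y
    unfolding a_def b_def using c_nonneg t_nonneg support component y
    by (subst nu_density_update_last) auto
  have "(\<integral>\<^sup>+ y. ennreal (nu_density c t K (x(Suc K := y))) \<partial>M)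
      = (\<integral>\<^sup>+ y. ennreal a * ennreal (t y) + ennreal b * ennreal (c y) \<partial>M)"
  proof (rule nn_integral_cong)
    fix y assume y: "y \<in> space M"
    have "ennreal (a * t y + b * c y) = ennreal (a * t y) + ennreal (b * c y)"
      using a_nonneg b_nonneg c_nonneg[OF y] t_nonneg[OF y] by (intro ennreal_plus) simp_all
    then show "ennreal (nu_density c t K (x(Suc K := y))) = ennreal a * ennreal (t y) + ennreal b * ennreal (c y)"
      using a_nonneg b_nonneg c_nonneg[OF y] t_nonneg[OF y] by (simp add: nu[OF y] ennreal_mult)
  qed
  also have "\<dots> = ennreal a * (\<integral>\<^sup>+ y. ennreal (t y) \<partial>M) + ennreal b * (\<integral>\<^sup>+ y. ennreal (c y) \<partial>M)"
    by (simp add: nn_integral_add nn_integral_cmult)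
  also have "\<dots> = ennreal a + ennreal b"
    unfolding c_normalized t_normalized by simp
  also have "\<dots> = ennreal (real (K + 1) / real (K + 2)) * ennreal (c (x 0) * (\<Prod>k\<in>{1..K}. t (x k)))
      + ennreal (1 / real (K + 2)) * ennreal (omega_density c t K x)"
    unfolding a_def b_def by (intro arg_cong2[where f = "(+)"] ennreal_mult') simp_all
  finally show ?thesis .
qed

lemma nn_integral_nu_density:
  assumes c_normalized: "(\<integral>\<^sup>+ \<psi>. ennreal (c \<psi>) \<partial>M) = 1"
  shows "(\<integral>\<^sup>+ x. ennreal (nu_density c t K x) \<partial>PiM {..Suc K} (\<lambda>_. M)) = 1"
proof -
  have [measurable]: "(\<lambda>x. c (x 0) * (\<Prod>k\<in>{1..K}. t (x k))) \<in> borel_measurable (PiM {..K} (\<lambda>_. M))"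
    by measurable
  have "{..Suc K} = insert (Suc K) {..K}"
    by auto
  then have "(\<integral>\<^sup>+ x. ennreal (nu_density c t K x) \<partial>PiM {..Suc K} (\<lambda>_. M))
      = (\<integral>\<^sup>+ x. \<integral>\<^sup>+ y. ennreal (nu_density c t K (x(Suc K := y))) \<partial>M \<partial>PiM {..K} (\<lambda>_. M))"
    using borel_measurable_nu_density[of K] by (simp add: product_nn_integral_insert)
  also have "\<dots> = (\<integral>\<^sup>+ x. ennreal (real (K + 1) / real (K + 2)) * ennreal (c (x 0) * (\<Prod>k\<in>{1..K}. t (x k)))
      + ennreal (1 / real (K + 2)) * ennreal (omega_density c t K x) \<partial>PiM {..K} (\<lambda>_. M))"
    using c_normalized by (intro nn_integral_cong nn_integral_nu_density_last_coordinate)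
  also have "\<dots> = ennreal (real (K + 1) / real (K + 2) + 1 / real (K + 2))"
    using nn_integral_target_times_proposals[OF c_normalized] nn_integral_omega_density
    by (simp add: nn_integral_add nn_integral_cmult)
  also have "\<dots> = 1"
    by (simp add: field_simps)
  finally show ?thesis .
qed

end

lemma nn_integral_cond:
  assumes "q z \<in> borel_measurable M" and "0 < marg M q z" and "marg M q z < \<infinity>"
  shows "(\<integral>\<^sup>+ \<psi>. ennreal (cond M q z \<psi>) \<partial>M) = 1"
proof -
  define m where "m = enn2real (marg M q z)"
  have m: "marg M q z = ennreal m" "0 < m"
    using assms by (simp_all add: m_def enn2real_positive_iff)
  have "(\<integral>\<^sup>+ \<psi>. ennreal (cond M q z \<psi>) \<partial>M) = (\<integral>\<^sup>+ \<psi>. ennreal (q z \<psi>) * ennreal (1 / m) \<partial>M)"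
    using m by (intro nn_integral_cong) (simp add: cond_def m_def ennreal_mult''[symmetric])
  also have "\<dots> = ennreal m * ennreal (1 / m)"
    using assms(1) by (simp add: nn_integral_multc marg_def m(1)[symmetric])
  also have "\<dots> = 1"
    using m by (simp add: ennreal_mult''[symmetric])
  finally show ?thesis .
qed

theorem lemma2:
  fixes N :: "'z measure" and M :: "'p measure"
    and q :: "'z \<Rightarrow> 'p \<Rightarrow> real" and \<tau> :: "'z \<Rightarrow> 'p \<Rightarrow> real"
    and z :: 'z and K :: nat
  assumes "sigma_finite_measure N" and "sigma_finite_measure M"
    and q_meas: "(\<lambda>(z', \<psi>). q z' \<psi>) \<in> borel_measurable (N \<Otimes>\<^sub>M M)"
    and q_nonneg: "\<And>z' \<psi>. z' \<in> space N \<Longrightarrow> \<psi> \<in> space M \<Longrightarrow> 0 \<le> q z' \<psi>"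
    and q_norm: "(\<integral>\<^sup>+ x. ennreal (case x of (z', \<psi>) \<Rightarrow> q z' \<psi>) \<partial>(N \<Otimes>\<^sub>M M)) = 1"
    and z_in: "z \<in> space N"
    and qz_pos: "0 < marg M q z" and qz_fin: "marg M q z < \<infinity>"
    and tau_meas: "\<tau> z \<in> borel_measurable M"
    and tau_nonneg: "\<And>\<psi>. \<psi> \<in> space M \<Longrightarrow> 0 \<le> \<tau> z \<psi>"
    and tau_norm: "(\<integral>\<^sup>+ \<psi>. ennreal (\<tau> z \<psi>) \<partial>M) = 1"
    and supp: "\<And>\<psi>. \<psi> \<in> space M \<Longrightarrow> \<tau> z \<psi> = 0 \<Longrightarrow> q z \<psi> = 0"
  shows "nu M q \<tau> z K \<in> borel_measurable (PiM {..Suc K} (\<lambda>_. M))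
    \<and> (\<forall>\<psi>s \<in> space (PiM {..Suc K} (\<lambda>_. M)). 0 \<le> nu M q \<tau> z K \<psi>s)
    \<and> (\<integral>\<^sup>+ \<psi>s. ennreal (nu M q \<tau> z K \<psi>s) \<partial>(PiM {..Suc K} (\<lambda>_. M))) = 1"
proof -
  have q_z[measurable]: "q z \<in> borel_measurable M"
    using measurable_Pair2[OF q_meas z_in] by simp
  have marg_pos: "0 < enn2real (marg M q z)"
    using qz_pos qz_fin by (simp add: enn2real_positive_iff)
  interpret importance_sampling M "cond M q z" "\<tau> z"
  proof (rule importance_sampling.intro)
    show "cond M q z \<in> borel_measurable M"
      unfolding cond_def by measurable
  qed (use assms(2) tau_meas tau_nonneg tau_norm q_nonneg[OF z_in] supp marg_pos in \<open>simp_all add: cond_def\<close>)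
  show ?thesis
    unfolding nu_eq_nu_density
    using borel_measurable_nu_density nu_density_nonneg
      nn_integral_nu_density[OF nn_integral_cond[OF q_z qz_pos qz_fin]]
    by blast
qed

end
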